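(* Let $\mathbb{F}\in\{\mathbb{R},\mathbb{C}\}$, let $\boldsymbol A\in\mathbb{F}^{m\times n}$ with $m<n$, and let $k\in\{1,\dots,n\}$ be an integer. Suppose there exist a map $\Delta:\mathbb{R}^m\to\mathbb{F}^n$ and a constant $c_0>0$ such that \[ \mathrm{dist}(\Delta(|\boldsymbol A\boldsymbol x|),\boldsymbol x)\le c_0\,\sigma_k(\boldsymbol x)_2\qquad\text{for all }\boldsymbol x\in\mathbb{F}^n . \] Then $m\ge c\,n$ for a constant $c>0$ depending only on $c_0$.
   Context: $|\boldsymbol u|$ is the entrywise modulus. $\mathrm{dist}(\boldsymbol x,\boldsymbol y)=\min_{c\in\mathbb F,|c|=1}\|\boldsymbol x-c\boldsymbol y\|_2$. $\Sigma_k=\{\boldsymbol z\in\mathbb F^n:\|\boldsymbol z\|_0\le k\}$, $\sigma_k(\boldsymbol x)_2=\min_{\boldsymbol z\in\Sigma_k}\mathrm{dist}(\boldsymbol x,\boldsymbol z)$. *)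

theory Defs
  imports Complex_Main
begin

text \<open>Vectors in F^n are represented as functions nat => F vanishing at indices >= n
  (F = real or complex, both instances of real_normed_field).
  An m x n matrix is a function nat => nat => F, only entries i<m, j<n matter.\<close>

definition fvec :: "nat \<Rightarrow> (nat \<Rightarrow> 'a::zero) set" where
  "fvec n = {x. \<forall>i\<ge>n. x i = 0}"

definition matvec :: "(nat \<Rightarrow> nat \<Rightarrow> 'a::comm_ring) \<Rightarrow> nat \<Rightarrow> nat \<Rightarrow> (nat \<Rightarrow> 'a) \<Rightarrow> nat \<Rightarrow> 'a" where
  "matvec A m n x = (\<lambda>i. if i < m then (\<Sum>j<n. A i j * x j) else 0)"

definition entry_abs :: "(nat \<Rightarrow> 'a::real_normed_vector) \<Rightarrow> nat \<Rightarrow> real" where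
  "entry_abs u = (\<lambda>i. norm (u i))"

definition norm2 :: "nat \<Rightarrow> (nat \<Rightarrow> 'a::real_normed_vector) \<Rightarrow> real" where
  "norm2 n x = sqrt (\<Sum>i<n. (norm (x i))\<^sup>2)"

definition pdist :: "nat \<Rightarrow> (nat \<Rightarrow> 'a::real_normed_field) \<Rightarrow> (nat \<Rightarrow> 'a) \<Rightarrow> real" where
  "pdist n x y = Inf {norm2 n (\<lambda>i. x i - c * y i) | c. norm c = 1}"

definition sparse_set :: "nat \<Rightarrow> nat \<Rightarrow> (nat \<Rightarrow> 'a::zero) set" where
  "sparse_set n k = {z \<in> fvec n. card {i. i < n \<and> z i \<noteq> 0} \<le> k}"

definition sigma_k :: "nat \<Rightarrow> nat \<Rightarrow> (nat \<Rightarrow> 'a::real_normed_field) \<Rightarrow> real" where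
  "sigma_k n k x = Inf (pdist n x ` sparse_set n k)"

end

theory Submission
  imports Defs "HOL-Analysis.L2_Norm"
begin

(* Split a vector w of the kernel of A as w = x1 - x2, where x1 = w_i e_i is 1-sparse. Both
   pieces have the same measurements, so the decoder returns one point that is within distance
   c0 sigma_k(x1) = 0 of x1 and within c0 ||x2|| of x2; by the triangle inequality for the
   phase-invariant distance, ||w||^2 <= c0^2 (||w||^2 - |w_i|^2).
   Such a w can be chosen with |w_i|^2 >= (1 - m/n) ||w||^2: the orthogonal projection P onto
   the kernel has trace at least n - m, so some P_ii >= 1 - m/n, and the column w = P e_i has
   w_i = P_ii = ||w||^2. Together, 1 <= c0^2 m / n. Over the reals one takes the real part of
   the complex column, which keeps w_i and can only lose norm elsewhere. *)

lemma norm2_nonneg: "0 \<le> norm2 n x"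
  unfolding norm2_def by (simp add: sum_nonneg)

lemma norm2_eq_L2_set: "norm2 n x = L2_set (\<lambda>i. norm (x i)) {..<n}"
  unfolding norm2_def L2_set_def by simp

lemma norm2_diff_le: "norm2 n (\<lambda>i. x i - y i) \<le> norm2 n x + norm2 n y"
proof -
  have "norm2 n (\<lambda>i. x i - y i) \<le> L2_set (\<lambda>i. norm (x i) + norm (y i)) {..<n}"
    unfolding norm2_eq_L2_set by (rule L2_set_mono) (auto simp: norm_triangle_ineq4)
  also have "\<dots> \<le> norm2 n x + norm2 n y"
    unfolding norm2_eq_L2_set by (rule L2_set_triangle_ineq)
  finally show ?thesis .
qed

lemma norm2_mult_unit:
  fixes x :: "nat \<Rightarrow> 'a::real_normed_field"
  assumes "norm c = 1"
  shows "norm2 n (\<lambda>i. c * x i) = norm2 n x"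
  using assms by (simp add: norm2_def norm_mult)

lemma pdist_set_nonempty:
  "{norm2 n (\<lambda>i. x i - c * y i) |c. norm (c :: 'a::real_normed_field) = 1} \<noteq> {}"
  by (auto intro: exI[of _ 1])

lemma pdist_le_norm2:
  fixes x y :: "nat \<Rightarrow> 'a::real_normed_field"
  assumes "norm c = 1"
  shows "pdist n x y \<le> norm2 n (\<lambda>i. x i - c * y i)"
  unfolding pdist_def
  by (rule cInf_lower) (use assms in \<open>auto intro!: bdd_belowI[where m = 0] simp: norm2_nonneg\<close>)

lemma pdist_greatest:
  fixes x y :: "nat \<Rightarrow> 'a::real_normed_field"
  assumes "\<And>c. norm c = 1 \<Longrightarrow> b \<le> norm2 n (\<lambda>i. x i - c * y i)"
  shows "b \<le> pdist n x y"
  unfolding pdist_def by (rule cInf_greatest[OF pdist_set_nonempty]) (use assms in auto)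

lemma pdist_nonneg: "0 \<le> pdist n (x :: nat \<Rightarrow> 'a::real_normed_field) y"
  by (rule pdist_greatest) (rule norm2_nonneg)

lemma pdist_lessE:
  fixes x y :: "nat \<Rightarrow> 'a::real_normed_field"
  assumes "pdist n x y < e"
  obtains c where "norm c = 1" and "norm2 n (\<lambda>i. x i - c * y i) < e"
  using cInf_lessD[OF pdist_set_nonempty assms[unfolded pdist_def]] by auto

lemma pdist_triangle:
  fixes x y z :: "nat \<Rightarrow> 'a::real_normed_field"
  shows "pdist n x y \<le> pdist n z x + pdist n z y"
proof (rule field_le_epsilon)
  fix e :: real
  assume "0 < e"
  obtain a where a: "norm a = 1" "norm2 n (\<lambda>i. z i - a * x i) < pdist n z x + e / 2"
    using pdist_lessE[of n z x "pdist n z x + e / 2"] \<open>0 < e\<close> by auto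
  obtain b where b: "norm b = 1" "norm2 n (\<lambda>i. z i - b * y i) < pdist n z y + e / 2"
    using pdist_lessE[of n z y "pdist n z y + e / 2"] \<open>0 < e\<close> by auto
  have "a \<noteq> 0" using a(1) by auto
  have "pdist n x y \<le> norm2 n (\<lambda>i. x i - b / a * y i)"
    by (rule pdist_le_norm2) (simp add: a(1) b(1) norm_divide)
  also have "\<dots> = norm2 n (\<lambda>i. a * (x i - b / a * y i))"
    using a(1) by (simp add: norm2_mult_unit)
  also have "\<dots> = norm2 n (\<lambda>i. (z i - b * y i) - (z i - a * x i))"
    using \<open>a \<noteq> 0\<close> by (simp add: algebra_simps)
  also have "\<dots> \<le> norm2 n (\<lambda>i. z i - b * y i) + norm2 n (\<lambda>i. z i - a * x i)"
    by (rule norm2_diff_le)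
  finally show "pdist n x y \<le> pdist n z x + pdist n z y + e"
    using a(2) b(2) by simp
qed

lemma sigma_k_le_pdist:
  fixes x :: "nat \<Rightarrow> 'a::real_normed_field"
  assumes "y \<in> sparse_set n k"
  shows "sigma_k n k x \<le> pdist n x y"
  unfolding sigma_k_def
  by (rule cInf_lower) (use assms in \<open>auto intro!: bdd_belowI[where m = 0] simp: pdist_nonneg\<close>)

lemma zero_in_sparse_set: "(\<lambda>i. 0) \<in> sparse_set n k"
  by (simp add: sparse_set_def fvec_def)

lemma sigma_k_le_norm2: "sigma_k n k (x :: nat \<Rightarrow> 'a::real_normed_field) \<le> norm2 n x"
proof -
  have "sigma_k n k x \<le> pdist n x (\<lambda>i. 0)"
    by (rule sigma_k_le_pdist[OF zero_in_sparse_set])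
  also have "\<dots> \<le> norm2 n (\<lambda>i. x i - 1 * 0)"
    by (rule pdist_le_norm2) simp
  finally show ?thesis by simp
qed

lemma sigma_k_nonneg: "0 \<le> sigma_k n k (x :: nat \<Rightarrow> 'a::real_normed_field)"
  unfolding sigma_k_def
  by (rule cInf_greatest) (use zero_in_sparse_set in \<open>auto simp: pdist_nonneg\<close>)

lemma sigma_k_sparse:
  fixes x :: "nat \<Rightarrow> 'a::real_normed_field"
  assumes "x \<in> sparse_set n k"
  shows "sigma_k n k x = 0"
proof -
  have "sigma_k n k x \<le> pdist n x x"
    by (rule sigma_k_le_pdist[OF assms])
  also have "\<dots> \<le> norm2 n (\<lambda>i. x i - 1 * x i)"
    by (rule pdist_le_norm2) simp
  finally show ?thesis
    using sigma_k_nonneg[of n k x] by (simp add: norm2_def)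
qed

lemma instance_optimal_kernel_norm_le:
  fixes A :: "nat \<Rightarrow> nat \<Rightarrow> 'a::real_normed_field" and \<Delta> :: "(nat \<Rightarrow> real) \<Rightarrow> nat \<Rightarrow> 'a"
  assumes "1 \<le> k" and "0 \<le> c0"
    and decoder: "\<forall>x\<in>fvec n. pdist n (\<Delta> (entry_abs (matvec A m n x))) x \<le> c0 * sigma_k n k x"
    and w: "w \<in> fvec n" and ker: "\<And>r. r < m \<Longrightarrow> (\<Sum>j<n. A r j * w j) = 0" and "i < n"
  shows "norm2 n w \<le> c0 * norm2 n (\<lambda>j. if j = i then 0 else w j)"
proof -
  define x1 where "x1 j = (if j = i then w i else 0)" for j
  define x2 where "x2 j = (if j = i then 0 else - w j)" for j
  have split: "x1 j - x2 j = w j" for j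
    by (simp add: x1_def x2_def)
  have "x1 \<in> fvec n" "x2 \<in> fvec n"
    using w \<open>i < n\<close> by (auto simp: fvec_def x1_def x2_def)
  have "x1 \<in> sparse_set n k"
  proof -
    have "{j. j < n \<and> x1 j \<noteq> 0} \<subseteq> {i}" by (auto simp: x1_def)
    then have "card {j. j < n \<and> x1 j \<noteq> 0} \<le> 1"
      using card_mono[of "{i}"] by fastforce
    then show ?thesis
      using \<open>x1 \<in> fvec n\<close> \<open>1 \<le> k\<close> by (simp add: sparse_set_def)
  qed
  have "matvec A m n x1 = matvec A m n x2"
  proof
    fix r
    have "(\<Sum>j<n. A r j * x1 j) - (\<Sum>j<n. A r j * x2 j) = (\<Sum>j<n. A r j * w j)"
      by (simp add: sum_subtractf[symmetric] right_diff_distrib[symmetric] split)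
    then show "matvec A m n x1 r = matvec A m n x2 r"
      using ker[of r] by (auto simp: matvec_def)
  qed
  define z where "z = \<Delta> (entry_abs (matvec A m n x1))"
  have "norm2 n w \<le> pdist n x1 x2"
  proof (rule pdist_greatest)
    fix c :: 'a
    assume "norm c = 1"
    then have "norm (x1 j - c * x2 j) = norm (w j)" for j
      by (simp add: x1_def x2_def norm_mult)
    then show "norm2 n w \<le> norm2 n (\<lambda>j. x1 j - c * x2 j)"
      by (simp add: norm2_def)
  qed
  also have "\<dots> \<le> pdist n z x1 + pdist n z x2"
    by (rule pdist_triangle)
  also have "\<dots> \<le> c0 * sigma_k n k x1 + c0 * sigma_k n k x2"
    using decoder \<open>x1 \<in> fvec n\<close> \<open>x2 \<in> fvec n\<close> \<open>matvec A m n x1 = matvec A m n x2\<close>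
    unfolding z_def by (intro add_mono) auto
  also have "\<dots> \<le> c0 * norm2 n x2"
    using \<open>0 \<le> c0\<close> sigma_k_le_norm2[of n k x2]
    by (simp add: sigma_k_sparse[OF \<open>x1 \<in> sparse_set n k\<close>] mult_left_mono)
  also have "norm2 n x2 = norm2 n (\<lambda>j. if j = i then 0 else w j)"
    unfolding norm2_def x2_def by (simp add: if_distrib[of norm] cong: if_cong)
  finally show ?thesis .
qed

definition heavy_kernel_vector ::
    "(nat \<Rightarrow> nat \<Rightarrow> 'a::real_normed_field) \<Rightarrow> nat \<Rightarrow> nat \<Rightarrow> (nat \<Rightarrow> 'a) \<Rightarrow> nat \<Rightarrow> bool" where
  "heavy_kernel_vector A m n w i \<longleftrightarrow>
     w \<in> fvec n \<and> i < n \<and> (\<forall>r<m. (\<Sum>j<n. A r j * w j) = 0) \<and> w i \<noteq> 0 \<and>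
     (real n - real m) * (\<Sum>j<n. (norm (w j))\<^sup>2) \<le> real n * (norm (w i))\<^sup>2"

lemma measurements_lower_bound:
  fixes A :: "nat \<Rightarrow> nat \<Rightarrow> 'a::real_normed_field" and \<Delta> :: "(nat \<Rightarrow> real) \<Rightarrow> nat \<Rightarrow> 'a"
  assumes "1 \<le> k" and "0 \<le> c0"
    and decoder: "\<forall>x\<in>fvec n. pdist n (\<Delta> (entry_abs (matvec A m n x))) x \<le> c0 * sigma_k n k x"
    and "heavy_kernel_vector A m n w i"
  shows "real n \<le> c0\<^sup>2 * real m"
proof -
  have w: "w \<in> fvec n" and ker: "\<And>r. r < m \<Longrightarrow> (\<Sum>j<n. A r j * w j) = 0" and "i < n"
    and "w i \<noteq> 0" and heavy: "(real n - real m) * (\<Sum>j<n. (norm (w j))\<^sup>2) \<le> real n * (norm (w i))\<^sup>2"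
    using \<open>heavy_kernel_vector A m n w i\<close> by (auto simp: heavy_kernel_vector_def)
  define S where "S = (\<Sum>j<n. (norm (w j))\<^sup>2)"
  define t where "t = (norm (w i))\<^sup>2"
  have "0 < t" using \<open>w i \<noteq> 0\<close> by (simp add: t_def)
  have "t \<le> S"
    unfolding S_def t_def using \<open>i < n\<close> by (intro member_le_sum) auto
  have "(\<Sum>j<n. (norm (if j = i then 0 else w j))\<^sup>2)
      = (\<Sum>j<n. (norm (w j))\<^sup>2 - (if j = i then t else 0))"
    by (rule sum.cong) (auto simp: t_def)
  also have "\<dots> = S - t"
    using \<open>i < n\<close> by (simp add: sum_subtractf S_def)
  finally have rest: "(\<Sum>j<n. (norm (if j = i then 0 else w j))\<^sup>2) = S - t" .
  have "(norm2 n w)\<^sup>2 \<le> (c0 * norm2 n (\<lambda>j. if j = i then 0 else w j))\<^sup>2"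
    using instance_optimal_kernel_norm_le[OF assms(1-3) w ker \<open>i < n\<close>] norm2_nonneg
    by (intro power_mono)
  then have "S \<le> c0\<^sup>2 * (S - t)"
    using \<open>0 < t\<close> \<open>t \<le> S\<close>
    by (simp add: power_mult_distrib norm2_def S_def[symmetric] rest)
  then have "real n * S \<le> real n * (c0\<^sup>2 * (S - t))"
    by (rule mult_left_mono) simp
  also have "\<dots> = c0\<^sup>2 * (real n * S - real n * t)"
    by (simp add: algebra_simps)
  also have "\<dots> \<le> c0\<^sup>2 * (real n * S - (real n - real m) * S)"
    using heavy by (intro mult_left_mono) (auto simp: S_def t_def)
  also have "\<dots> = c0\<^sup>2 * real m * S"
    by (simp add: algebra_simps)
  finally show ?thesis
    using \<open>0 < t\<close> \<open>t \<le> S\<close> by simp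
qed

lemma sum_mult_cnj: "(\<Sum>k\<in>A. z k * cnj (z k)) = complex_of_real (\<Sum>k\<in>A. (cmod (z k))\<^sup>2)"
  by (simp only: complex_norm_square of_real_sum)

(* Orthogonal projections of C^n; the trace, the sum of Re (P i i), is the rank. *)
definition orth_proj :: "nat \<Rightarrow> (nat \<Rightarrow> nat \<Rightarrow> complex) \<Rightarrow> bool" where
  "orth_proj n P \<longleftrightarrow>
     (\<forall>i j. n \<le> i \<or> n \<le> j \<longrightarrow> P i j = 0) \<and>
     (\<forall>i j. P j i = cnj (P i j)) \<and>
     (\<forall>i j. (\<Sum>k<n. P i k * P k j) = P i j)"

lemma orth_proj_zero: "orth_proj n P \<Longrightarrow> n \<le> i \<or> n \<le> j \<Longrightarrow> P i j = 0"
  unfolding orth_proj_def by blast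

lemma orth_proj_hermitian: "orth_proj n P \<Longrightarrow> P j i = cnj (P i j)"
  unfolding orth_proj_def by blast

lemma orth_proj_idem: "orth_proj n P \<Longrightarrow> (\<Sum>k<n. P i k * P k j) = P i j"
  unfolding orth_proj_def by blast

lemma orth_proj_identity: "orth_proj n (\<lambda>i j. if i = j \<and> i < n then 1 else 0)"
proof -
  have "(\<Sum>k<n. (if i = k \<and> i < n then 1 else 0) * (if k = j \<and> k < n then 1 else 0))
      = (if i = j \<and> i < n then 1 else (0::complex))" for i j
  proof -
    have "(\<Sum>k<n. (if i = k \<and> i < n then 1 else 0) * (if k = j \<and> k < n then 1 else 0))
       = (\<Sum>k<n. if k = i then (if i = j \<and> i < n then 1 else (0::complex)) else 0)"
      by (rule sum.cong) auto
    then show ?thesis by simp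
  qed
  then show ?thesis unfolding orth_proj_def by auto
qed

lemma orth_proj_diag:
  assumes "orth_proj n P"
  shows "P i i = complex_of_real (\<Sum>j<n. (cmod (P j i))\<^sup>2)"
proof -
  have "complex_of_real (\<Sum>j<n. (cmod (P j i))\<^sup>2) = (\<Sum>j<n. P j i * cnj (P j i))"
    by (simp only: sum_mult_cnj)
  also have "\<dots> = (\<Sum>j<n. P i j * P j i)"
    using orth_proj_hermitian[OF assms, of i] by (simp add: mult.commute)
  also have "\<dots> = P i i"
    by (rule orth_proj_idem[OF assms])
  finally show ?thesis by simp
qed

lemma orth_proj_downdate:
  assumes P: "orth_proj n P" and Pu: "\<And>i. (\<Sum>k<n. P i k * u k) = u i"
    and unit: "(\<Sum>j<n. (cmod (u j))\<^sup>2) = 1"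
  shows "orth_proj n (\<lambda>i j. P i j - u i * cnj (u j))"
    and "(\<Sum>i<n. Re (P i i - u i * cnj (u i))) = (\<Sum>i<n. Re (P i i)) - 1"
proof -
  have uP: "(\<Sum>k<n. cnj (u k) * P k j) = cnj (u j)" for j
  proof -
    have "(\<Sum>k<n. cnj (u k) * P k j) = cnj (\<Sum>k<n. P j k * u k)"
      by (simp add: orth_proj_hermitian[OF P, of _ j] mult.commute)
    then show ?thesis by (simp add: Pu)
  qed
  have uu: "(\<Sum>k<n. u k * cnj (u k)) = 1"
    by (simp only: sum_mult_cnj unit of_real_1)
  show "orth_proj n (\<lambda>i j. P i j - u i * cnj (u j))"
    unfolding orth_proj_def
  proof (intro conjI allI impI)
    fix i j :: nat
    have u0: "u l = 0" if "n \<le> l" for l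
    proof -
      have "u l = (\<Sum>k<n. P l k * u k)" by (rule Pu[symmetric])
      also have "\<dots> = 0" using that by (simp add: orth_proj_zero[OF P])
      finally show ?thesis .
    qed
    assume "n \<le> i \<or> n \<le> j"
    then show "P i j - u i * cnj (u j) = 0"
      by (auto simp: orth_proj_zero[OF P] u0)
  next
    fix i j :: nat
    show "P j i - u j * cnj (u i) = cnj (P i j - u i * cnj (u j))"
      by (simp add: orth_proj_hermitian[OF P, of j i] mult.commute)
  next
    fix i j :: nat
    have expand: "(P i k - u i * cnj (u k)) * (P k j - u k * cnj (u j))
       = P i k * P k j - u i * (cnj (u k) * P k j) - (P i k * u k) * cnj (u j)
         + u i * cnj (u j) * (u k * cnj (u k))" for k
      by (simp add: algebra_simps)
    show "(\<Sum>k<n. (P i k - u i * cnj (u k)) * (P k j - u k * cnj (u j)))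
      = P i j - u i * cnj (u j)"
      unfolding expand sum.distrib sum_subtractf
        sum_distrib_left[symmetric] sum_distrib_right[symmetric]
      by (simp add: orth_proj_idem[OF P] uP Pu uu)
  qed
  have "(\<Sum>i<n. Re (u i * cnj (u i))) = 1"
    using unit by (simp flip: complex_norm_square)
  moreover have "(\<Sum>i<n. Re (P i i - u i * cnj (u i)))
      = (\<Sum>i<n. Re (P i i)) - (\<Sum>i<n. Re (u i * cnj (u i)))"
    by (simp only: minus_complex.sel sum_subtractf)
  ultimately show "(\<Sum>i<n. Re (P i i - u i * cnj (u i))) = (\<Sum>i<n. Re (P i i)) - 1"
    by linarith
qed

lemma sum_mult_fixed_vector:
  fixes P :: "nat \<Rightarrow> nat \<Rightarrow> 'a::semiring_0"
  assumes "\<And>i. (\<Sum>k<n. P i k * u k) = u i"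
  shows "(\<Sum>j<n. b j * u j) = (\<Sum>k<n. (\<Sum>j<n. b j * P j k) * u k)"
proof -
  have "(\<Sum>j<n. b j * u j) = (\<Sum>j<n. b j * (\<Sum>k<n. P j k * u k))"
    by (simp only: assms)
  also have "\<dots> = (\<Sum>j<n. \<Sum>k<n. b j * P j k * u k)"
    by (simp add: sum_distrib_left mult.assoc)
  also have "\<dots> = (\<Sum>k<n. (\<Sum>j<n. b j * P j k) * u k)"
    by (subst sum.swap) (simp add: sum_distrib_right)
  finally show ?thesis .
qed

lemma orth_proj_row_image_normalized:
  assumes P: "orth_proj n P" and nonzero: "(\<Sum>j<n. a j * P j l0) \<noteq> 0"
  obtains u r where "\<And>i. (\<Sum>k<n. P i k * u k) = u i" and "(\<Sum>l<n. (cmod (u l))\<^sup>2) = 1"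
    and "\<And>l. (\<Sum>j<n. a j * P j l) = complex_of_real r * cnj (u l)"
proof -
  define v where "v l = (\<Sum>j<n. P l j * cnj (a j))" for l
  have aP: "(\<Sum>j<n. a j * P j l) = cnj (v l)" for l
    by (simp add: v_def orth_proj_hermitian[OF P, of _ l] mult.commute)
  have "v l0 \<noteq> 0"
    using nonzero aP[of l0] by simp
  moreover have "v l = 0" if "n \<le> l" for l
    using that by (simp add: v_def orth_proj_zero[OF P])
  ultimately have "l0 < n" by (meson not_le)
  define s where "s = (\<Sum>l<n. (cmod (v l))\<^sup>2)"
  have "0 < s"
    unfolding s_def using \<open>l0 < n\<close> \<open>v l0 \<noteq> 0\<close> by (intro sum_pos2[of _ l0]) auto
  define r where "r = sqrt s"
  define u where "u l = v l / complex_of_real r" for l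
  have "0 < r" "r\<^sup>2 = s"
    using \<open>0 < s\<close> by (simp_all add: r_def)
  have Pv: "(\<Sum>k<n. P i k * v k) = v i" for i
  proof -
    have "(\<Sum>k<n. P i k * v k) = (\<Sum>k<n. \<Sum>j<n. P i k * P k j * cnj (a j))"
      by (simp add: v_def sum_distrib_left mult.assoc)
    also have "\<dots> = (\<Sum>j<n. (\<Sum>k<n. P i k * P k j) * cnj (a j))"
      by (subst sum.swap) (simp add: sum_distrib_right)
    finally show ?thesis by (simp add: orth_proj_idem[OF P] v_def)
  qed
  show ?thesis
  proof (rule that)
    show "(\<Sum>k<n. P i k * u k) = u i" for i
      using Pv[of i] by (simp add: u_def sum_divide_distrib[symmetric])
    show "(\<Sum>l<n. (cmod (u l))\<^sup>2) = 1"
      using \<open>r\<^sup>2 = s\<close> \<open>0 < s\<close>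
      by (simp add: u_def norm_divide power_divide s_def[symmetric] flip: sum_divide_distrib)
    show "(\<Sum>j<n. a j * P j l) = complex_of_real r * cnj (u l)" for l
      using \<open>0 < r\<close> by (simp add: aP u_def)
  qed
qed

lemma orth_proj_annihilate_row:
  assumes P: "orth_proj n P"
  obtains P' where "orth_proj n P'"
    and "(\<Sum>i<n. Re (P i i)) - 1 \<le> (\<Sum>i<n. Re (P' i i))"
    and "\<And>l. (\<Sum>j<n. a j * P' j l) = 0"
    and "\<And>b l. (\<And>l. (\<Sum>j<n. b j * P j l) = 0) \<Longrightarrow> (\<Sum>j<n. b j * P' j l) = 0"
proof (cases "\<forall>l. (\<Sum>j<n. a j * P j l) = 0")
  case True
  then show ?thesis using that[OF P] by simp
next
  case False
  then obtain u r where Pu: "\<And>i. (\<Sum>k<n. P i k * u k) = u i"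
    and unit: "(\<Sum>l<n. (cmod (u l))\<^sup>2) = 1"
    and aP: "\<And>l. (\<Sum>j<n. a j * P j l) = complex_of_real r * cnj (u l)"
    using orth_proj_row_image_normalized[OF P] by blast
  have au: "(\<Sum>j<n. a j * u j) = complex_of_real r"
  proof -
    have "(\<Sum>j<n. a j * u j) = complex_of_real r * (\<Sum>k<n. u k * cnj (u k))"
      by (simp add: sum_mult_fixed_vector[OF Pu] aP sum_distrib_left mult_ac)
    also have "(\<Sum>k<n. u k * cnj (u k)) = 1"
      by (simp only: sum_mult_cnj unit of_real_1)
    finally show ?thesis by simp
  qed
  have row: "(\<Sum>j<n. b j * (P j l - u j * cnj (u l)))
      = (\<Sum>j<n. b j * P j l) - (\<Sum>j<n. b j * u j) * cnj (u l)" for b l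
    by (simp add: right_diff_distrib sum_subtractf sum_distrib_right mult.assoc)
  show ?thesis
  proof (rule that)
    show "orth_proj n (\<lambda>i j. P i j - u i * cnj (u j))"
      by (rule orth_proj_downdate(1)[OF P Pu unit])
    show "(\<Sum>i<n. Re (P i i)) - 1 \<le> (\<Sum>i<n. Re (P i i - u i * cnj (u i)))"
      unfolding orth_proj_downdate(2)[OF P Pu unit] by (rule order_refl)
    show "(\<Sum>j<n. a j * (P j l - u j * cnj (u l))) = 0" for l
      by (simp add: row aP au)
    show "(\<Sum>j<n. b j * (P j l - u j * cnj (u l))) = 0"
      if "\<And>l. (\<Sum>j<n. b j * P j l) = 0" for b l
      using that by (simp add: row sum_mult_fixed_vector[OF Pu, of b])
  qed
qed

lemma orth_proj_onto_kernel_exists: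
  fixes A :: "nat \<Rightarrow> nat \<Rightarrow> complex"
  shows "\<exists>P. orth_proj n P \<and> real n - real m \<le> (\<Sum>i<n. Re (P i i))
    \<and> (\<forall>r<m. \<forall>l. (\<Sum>j<n. A r j * P j l) = 0)"
proof (induction m)
  case 0
  show ?case
    by (rule exI[of _ "\<lambda>i j. if i = j \<and> i < n then 1 else 0"]) (simp add: orth_proj_identity)
next
  case (Suc m)
  then obtain P where P: "orth_proj n P" "real n - real m \<le> (\<Sum>i<n. Re (P i i))"
    and AP: "\<forall>r<m. \<forall>l. (\<Sum>j<n. A r j * P j l) = 0"
    by blast
  obtain P' where "orth_proj n P'" "(\<Sum>i<n. Re (P i i)) - 1 \<le> (\<Sum>i<n. Re (P' i i))"
    and "\<And>l. (\<Sum>j<n. A m j * P' j l) = 0"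
    and "\<And>b l. (\<And>l. (\<Sum>j<n. b j * P j l) = 0) \<Longrightarrow> (\<Sum>j<n. b j * P' j l) = 0"
    using orth_proj_annihilate_row[OF P(1), where a = "A m"] by blast
  then show ?case
    using P(2) AP by (intro exI[of _ P']) (auto simp: less_Suc_eq)
qed

lemma orth_proj_column_in_kernel:
  fixes A :: "nat \<Rightarrow> nat \<Rightarrow> complex"
  assumes "m < n"
  obtains w i p where "w \<in> fvec n" and "i < n" and "\<And>r. r < m \<Longrightarrow> (\<Sum>j<n. A r j * w j) = 0"
    and "p = (\<Sum>j<n. (cmod (w j))\<^sup>2)" and "w i = complex_of_real p" and "0 < p"
    and "real n - real m \<le> real n * p"
proof -
  obtain P where P: "orth_proj n P" and trace: "real n - real m \<le> (\<Sum>i<n. Re (P i i))"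
    and AP: "\<And>r l. r < m \<Longrightarrow> (\<Sum>j<n. A r j * P j l) = 0"
    using orth_proj_onto_kernel_exists[of n m A] by blast
  have "\<exists>i<n. real n - real m \<le> real n * Re (P i i)"
  proof (rule ccontr)
    assume "\<not> ?thesis"
    then have "(\<Sum>i<n. real n * Re (P i i)) < (\<Sum>i<n. real n - real m)"
      using assms by (intro sum_strict_mono) (auto simp: not_le)
    with trace assms show False
      by (simp add: sum_distrib_left[symmetric] mult_left_mono)
  qed
  then obtain i where "i < n" and heavy: "real n - real m \<le> real n * Re (P i i)"
    by blast
  have "0 < real n * Re (P i i)"
    using heavy assms by (smt (verit) of_nat_less_iff)
  then have "0 < Re (P i i)"
    by (simp add: zero_less_mult_iff)
  show ?thesis
  proof (rule that[of "\<lambda>j. P j i" i "Re (P i i)"])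
    show "(\<lambda>j. P j i) \<in> fvec n"
      by (simp add: fvec_def orth_proj_zero[OF P])
  qed (use \<open>i < n\<close> heavy \<open>0 < Re (P i i)\<close> AP orth_proj_diag[OF P] in auto)
qed

lemma heavy_kernel_vector_exists_complex:
  fixes A :: "nat \<Rightarrow> nat \<Rightarrow> complex"
  assumes "m < n"
  shows "\<exists>w i. heavy_kernel_vector A m n w i"
proof (rule orth_proj_column_in_kernel[OF assms, where A = A])
  fix w i p
  assume w: "w \<in> fvec n" "i < n" "\<And>r. r < m \<Longrightarrow> (\<Sum>j<n. A r j * w j) = 0"
    and p: "p = (\<Sum>j<n. (cmod (w j))\<^sup>2)" "w i = complex_of_real p" "0 < p"
    and heavy: "real n - real m \<le> real n * p"
  have "(real n - real m) * p \<le> real n * p * p"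
    using heavy \<open>0 < p\<close> by (simp add: mult_right_mono)
  moreover have "norm (w i) = p"
    using p(2,3) by simp
  moreover have "(\<Sum>j<n. (norm (w j))\<^sup>2) = p"
    using p(1) by simp
  ultimately have "heavy_kernel_vector A m n w i"
    using w p(2,3) by (simp add: heavy_kernel_vector_def power2_eq_square mult.assoc)
  then show ?thesis by blast
qed

lemma heavy_kernel_vector_exists_real:
  fixes A :: "nat \<Rightarrow> nat \<Rightarrow> real"
  assumes "m < n"
  shows "\<exists>w i. heavy_kernel_vector A m n w i"
proof (rule orth_proj_column_in_kernel[OF assms, where A = "\<lambda>r j. complex_of_real (A r j)"])
  fix w i p
  assume w: "w \<in> fvec n" "i < n"
    and ker: "\<And>r. r < m \<Longrightarrow> (\<Sum>j<n. complex_of_real (A r j) * w j) = 0"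
    and p: "p = (\<Sum>j<n. (cmod (w j))\<^sup>2)" "w i = complex_of_real p" "0 < p"
    and heavy: "real n - real m \<le> real n * p"
  have Re_ker: "(\<Sum>j<n. A r j * Re (w j)) = 0" if "r < m" for r
    using arg_cong[OF ker[OF that], of Re] by simp
  have "(real n - real m) * (\<Sum>j<n. (Re (w j))\<^sup>2) \<le> (real n - real m) * p"
    unfolding p(1) using assms by (intro mult_left_mono sum_mono) (auto simp: cmod_power2)
  also have "\<dots> \<le> real n * p * p"
    using heavy \<open>0 < p\<close> by (simp add: mult_right_mono)
  finally have "heavy_kernel_vector A m n (\<lambda>j. Re (w j)) i"
    using w Re_ker p(2,3) by (auto simp: heavy_kernel_vector_def fvec_def power2_eq_square mult.assoc)
  then show ?thesis by blast
qed

theorem proposition2p10: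
  fixes c0 :: real
  assumes "c0 > 0"
  shows "\<exists>c>0.
    (\<forall>(A :: nat \<Rightarrow> nat \<Rightarrow> real) m n k (\<Delta> :: (nat \<Rightarrow> real) \<Rightarrow> nat \<Rightarrow> real).
       m < n \<and> 1 \<le> k \<and> k \<le> n \<and>
       (\<forall>y \<in> fvec m. \<Delta> y \<in> fvec n) \<and>
       (\<forall>x \<in> fvec n. pdist n (\<Delta> (entry_abs (matvec A m n x))) x \<le> c0 * sigma_k n k x)
       \<longrightarrow> real m \<ge> c * real n) \<and>
    (\<forall>(A :: nat \<Rightarrow> nat \<Rightarrow> complex) m n k (\<Delta> :: (nat \<Rightarrow> real) \<Rightarrow> nat \<Rightarrow> complex).
       m < n \<and> 1 \<le> k \<and> k \<le> n \<and>
       (\<forall>y \<in> fvec m. \<Delta> y \<in> fvec n) \<and>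
       (\<forall>x \<in> fvec n. pdist n (\<Delta> (entry_abs (matvec A m n x))) x \<le> c0 * sigma_k n k x)
       \<longrightarrow> real m \<ge> c * real n)"
proof (intro exI[of _ "1 / c0\<^sup>2"] conjI allI impI)
  show "0 < 1 / c0\<^sup>2"
    using \<open>c0 > 0\<close> by simp
  have scale: "1 / c0\<^sup>2 * real n \<le> real m" if "real n \<le> c0\<^sup>2 * real m" for m n :: nat
    using that \<open>c0 > 0\<close> by (simp add: field_simps)
  fix m n k
  show "1 / c0\<^sup>2 * real n \<le> real m"
    if hyps: "m < n \<and> 1 \<le> k \<and> k \<le> n \<and> (\<forall>y\<in>fvec m. \<Delta> y \<in> fvec n) \<and>
      (\<forall>x\<in>fvec n. pdist n (\<Delta> (entry_abs (matvec A m n x))) x \<le> c0 * sigma_k n k x)"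
    for A :: "nat \<Rightarrow> nat \<Rightarrow> real" and \<Delta> :: "(nat \<Rightarrow> real) \<Rightarrow> nat \<Rightarrow> real"
  proof -
    obtain w i where "heavy_kernel_vector A m n w i"
      using heavy_kernel_vector_exists_real[of m n A] hyps by blast
    with hyps show ?thesis
      using measurements_lower_bound[of k c0 n \<Delta> A m w i] \<open>c0 > 0\<close> scale by simp
  qed
  show "1 / c0\<^sup>2 * real n \<le> real m"
    if hyps: "m < n \<and> 1 \<le> k \<and> k \<le> n \<and> (\<forall>y\<in>fvec m. \<Delta> y \<in> fvec n) \<and>
      (\<forall>x\<in>fvec n. pdist n (\<Delta> (entry_abs (matvec A m n x))) x \<le> c0 * sigma_k n k x)"
    for A :: "nat \<Rightarrow> nat \<Rightarrow> complex" and \<Delta> :: "(nat \<Rightarrow> real) \<Rightarrow> nat \<Rightarrow> complex"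
  proof -
    obtain w i where "heavy_kernel_vector A m n w i"
      using heavy_kernel_vector_exists_complex[of m n A] hyps by blast
    with hyps show ?thesis
      using measurements_lower_bound[of k c0 n \<Delta> A m w i] \<open>c0 > 0\<close> scale by simp
  qed
qed

end
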